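(* Let $\mathfrak{h}$ be a $3$-step nilpotent real Lie algebra endowed with a Lorentzian inner product whose center is non-degenerate, and suppose this metric is $\lambda$-Einstein. Then $\lambda\geq0$.
   Context: Lorentzian means a nondegenerate symmetric bilinear form of signature $(1,n-1)$. Ricci operator of a Lie algebra with pseudo-Euclidean inner product: Levi-Civita product $2\langle \mathrm{L}_uv,w\rangle=\langle[u,v],w\rangle+\langle[w,u],v\rangle+\langle[w,v],u\rangle$, curvature $K(u,v)=\mathrm{L}_{[u,v]}-[\mathrm{L}_u,\mathrm{L}_v]$, $\langle\mathrm{Ric}\,u,v\rangle=\mathrm{tr}(w\mapsto K(u,w)v)$; $\lambda$-Einstein means $\mathrm{Ric}=\lambda\,\mathrm{Id}$. *)

theory Defs
  imports "HOL-Analysis.Analysis"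
begin

definition lie_algebra :: "('a::euclidean_space \<Rightarrow> 'a \<Rightarrow> 'a) \<Rightarrow> bool" where
  "lie_algebra br \<longleftrightarrow> bilinear br \<and> (\<forall>x. br x x = 0) \<and>
     (\<forall>x y z. br x (br y z) + br y (br z x) + br z (br x y) = 0)"

definition nondegenerate :: "('a::euclidean_space \<Rightarrow> 'a \<Rightarrow> real) \<Rightarrow> bool" where
  "nondegenerate g \<longleftrightarrow> (\<forall>x. (\<forall>y. g x y = 0) \<longrightarrow> x = 0)"

definition lorentzian :: "('a::euclidean_space \<Rightarrow> 'a \<Rightarrow> real) \<Rightarrow> bool" where
  "lorentzian g \<longleftrightarrow> bilinear g \<and> (\<forall>x y. g x y = g y x) \<and> nondegenerate g \<and>
     (\<exists>B e0. independent B \<and> span B = UNIV \<and> e0 \<in> B \<and> g e0 e0 = -1 \<and>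
        (\<forall>e\<in>B - {e0}. g e e = 1) \<and> (\<forall>e\<in>B. \<forall>f\<in>B. e \<noteq> f \<longrightarrow> g e f = 0))"

fun lcs :: "('a::euclidean_space \<Rightarrow> 'a \<Rightarrow> 'a) \<Rightarrow> nat \<Rightarrow> 'a set" where
  "lcs br 0 = UNIV"
| "lcs br (Suc k) = span {br x y | x y. x \<in> lcs br k}"

definition three_step_nilpotent :: "('a::euclidean_space \<Rightarrow> 'a \<Rightarrow> 'a) \<Rightarrow> bool" where
  "three_step_nilpotent br \<longleftrightarrow> lcs br 3 = {0} \<and> lcs br 2 \<noteq> {0}"

definition center :: "('a::euclidean_space \<Rightarrow> 'a \<Rightarrow> 'a) \<Rightarrow> 'a set" where
  "center br = {z. \<forall>x. br z x = 0}"

definition nondegenerate_on :: "('a::euclidean_space \<Rightarrow> 'a \<Rightarrow> real) \<Rightarrow> 'a set \<Rightarrow> bool" where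
  "nondegenerate_on g S \<longleftrightarrow> (\<forall>z\<in>S. (\<forall>w\<in>S. g z w = 0) \<longrightarrow> z = 0)"

definition LC :: "('a::euclidean_space \<Rightarrow> 'a \<Rightarrow> 'a) \<Rightarrow> ('a \<Rightarrow> 'a \<Rightarrow> real) \<Rightarrow> 'a \<Rightarrow> 'a \<Rightarrow> 'a" where
  "LC br g u v = (THE x. \<forall>w. 2 * g x w = g (br u v) w + g (br w u) v + g (br w v) u)"

definition curv :: "('a::euclidean_space \<Rightarrow> 'a \<Rightarrow> 'a) \<Rightarrow> ('a \<Rightarrow> 'a \<Rightarrow> real) \<Rightarrow> 'a \<Rightarrow> 'a \<Rightarrow> 'a \<Rightarrow> 'a" where
  "curv br g u v w = LC br g (br u v) w - (LC br g u (LC br g v w) - LC br g v (LC br g u w))"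

definition trace :: "('a::euclidean_space \<Rightarrow> 'a) \<Rightarrow> real" where
  "trace f = (\<Sum>b\<in>Basis. f b \<bullet> b)"

definition ricci :: "('a::euclidean_space \<Rightarrow> 'a \<Rightarrow> 'a) \<Rightarrow> ('a \<Rightarrow> 'a \<Rightarrow> real) \<Rightarrow> 'a \<Rightarrow> 'a" where
  "ricci br g u = (THE x. \<forall>v. g x v = trace (\<lambda>w. curv br g u w v))"

definition einstein :: "('a::euclidean_space \<Rightarrow> 'a \<Rightarrow> 'a) \<Rightarrow> ('a \<Rightarrow> 'a \<Rightarrow> real) \<Rightarrow> real \<Rightarrow> bool" where
  "einstein br g lam \<longleftrightarrow> (\<forall>u. ricci br g u = lam *\<^sub>R u)"

end

theory Submission
  imports Defs
begin

text \<open>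
  For a metric Lie algebra with traceless adjoint maps and vanishing Killing form (such as a
  nilpotent one), the Einstein condition read off in a basis \<open>e\<^sub>a\<close> with dual basis \<open>e\<^sup>a\<close> says
  \<open>\<lambda> = -1/2 \<Sum>\<^sub>b\<^sub>,\<^sub>c P(c,a,b) + 1/4 \<Sum>\<^sub>b\<^sub>,\<^sub>c P(a,b,c)\<close> with
  \<open>P(a,b,c) = g([e\<^sub>b,e\<^sub>c],e\<^sup>a) g([e\<^sup>b,e\<^sup>c],e\<^sub>a)\<close>. Summing these identities with weights \<open>t\<^sub>a\<close> gives
  \<open>4 \<lambda> \<Sum> t\<^sub>a = \<Sum> (t\<^sub>a - t\<^sub>b - t\<^sub>c) P(a,b,c)\<close>, so \<open>\<lambda> \<ge> 0\<close> once all terms are nonnegative.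

  In the three-step nilpotent case let \<open>Z\<close> be the (nondegenerate) center, \<open>V = Z\<^sup>\<perp>\<close>, \<open>U\<close> the
  projection of \<open>[h, h]\<close> to \<open>V\<close> and \<open>W = V \<inter> U\<^sup>\<perp>\<close>. Brackets raise the levels 1, 2, 3 of
  \<open>W, U, Z\<close>. If \<open>U\<close> is nondegenerate, one of the three layers contains a unit timelike vector \<open>t\<close>;
  an orthonormal basis adapted to the layers and to \<open>t\<close>, weighted by the levels and with weight 2
  for \<open>t\<close>, makes every term nonnegative. If \<open>U\<close> is degenerate, a null vector \<open>n \<in> U \<inter> U\<^sup>\<perp>\<close> and a
  null partner \<open>m \<in> V\<close> yield an adapted basis that is self-dual up to swapping \<open>n\<close> and \<open>m\<close>;
  weight 2 for both again makes every term nonnegative.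
\<close>

section \<open>Bilinear forms, traces and adjoints\<close>

locale bilinear_map =
  fixes h :: "'a::real_vector \<Rightarrow> 'b::real_vector \<Rightarrow> 'c::real_vector"
  assumes bilinear: "bilinear h"
begin

lemma linear_left: "linear (\<lambda>x. h x y)" and linear_right: "linear (h x)"
  using bilinear unfolding bilinear_def by auto

lemmas simps[simp] =
  bilinear_ladd[OF bilinear] bilinear_radd[OF bilinear]
  bilinear_lsub[OF bilinear] bilinear_rsub[OF bilinear]
  bilinear_lneg[OF bilinear] bilinear_rneg[OF bilinear]
  bilinear_lmul[OF bilinear] bilinear_rmul[OF bilinear]
  bilinear_lzero[OF bilinear] bilinear_rzero[OF bilinear]

lemma sum_left[simp]: "h (sum f S) y = (\<Sum>i\<in>S. h (f i) y)"
  by (rule linear_sum[OF linear_left])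

lemma sum_right[simp]: "h x (sum f S) = (\<Sum>i\<in>S. h x (f i))"
  by (rule linear_sum[OF linear_right])

end

lemma trace_add: "trace (\<lambda>w. f w + h w) = trace f + trace h"
  unfolding trace_def by (simp add: inner_add_left sum.distrib)

lemma trace_diff: "trace (\<lambda>w. f w - h w) = trace f - trace h"
  unfolding trace_def by (simp add: inner_diff_left sum_subtractf)

lemma trace_scaleR: "trace (\<lambda>w. c *\<^sub>R f w) = c * trace f"
  unfolding trace_def by (simp add: sum_distrib_left)

lemma trace_neg: "trace (\<lambda>w. - f w) = - trace f"
  unfolding trace_def by (simp add: sum_negf)

lemma trace_comp_commute:
  fixes P Q :: "'a::euclidean_space \<Rightarrow> 'a"
  assumes "linear P" "linear Q"
  shows "trace (\<lambda>w. P (Q w)) = trace (\<lambda>w. Q (P w))"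
proof -
  have expand: "trace (\<lambda>w. P (Q w)) = (\<Sum>b\<in>Basis. \<Sum>c\<in>Basis. (Q b \<bullet> c) * (P c \<bullet> b))"
    if "linear P" for P Q :: "'a \<Rightarrow> 'a"
  proof -
    have "P (Q b) = (\<Sum>c\<in>Basis. (Q b \<bullet> c) *\<^sub>R P c)" for b
      using linear_sum[OF that] linear_scale[OF that] euclidean_representation[of "Q b"]
      by (metis (no_types, lifting) sum.cong)
    then show ?thesis
      unfolding trace_def by (simp add: inner_sum_left)
  qed
  show ?thesis
    unfolding expand[OF assms(1)] expand[OF assms(2)]
    by (subst sum.swap) (simp add: mult.commute)
qed

lemma linear_inj_on_image_eq:
  fixes T :: "'a::euclidean_space \<Rightarrow> 'a"
  assumes T: "linear T" and S: "subspace S" and TS: "T ` S \<subseteq> S" and inj: "inj_on T S"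
  shows "T ` S = S"
proof -
  have "span S = S" using S by (simp add: span_eq_iff)
  then have "dim (T ` S) = dim S" using dim_image_eq[OF T, of S] inj by metis
  then show ?thesis using subspace_dim_equal[OF linear_subspace_image[OF T S] S TS] by simp
qed

lemma inner_sum_orthonormal_basis:
  fixes B :: "'a::euclidean_space set"
  assumes "finite B" "pairwise orthogonal B" "\<forall>b\<in>B. norm b = 1" "b \<in> B"
  shows "(\<Sum>c\<in>B. f c *\<^sub>R c) \<bullet> b = f b"
proof -
  have "(\<Sum>c\<in>B. f c *\<^sub>R c) \<bullet> b = (\<Sum>c\<in>B. if c = b then f c else 0)"
    unfolding inner_sum_left
    using assms by (intro sum.cong) (auto simp: pairwise_def orthogonal_def norm_eq_1)
  with assms show ?thesis by simp
qed

locale sym_form = g: bilinear_map g for g :: "'a::euclidean_space \<Rightarrow> 'a \<Rightarrow> real" +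
  assumes sym: "g x y = g y x"
begin

definition perp :: "'a set \<Rightarrow> 'a set" where
  "perp S = {x. \<forall>y\<in>S. g x y = 0}"

lemma perp_iff: "x \<in> perp S \<longleftrightarrow> (\<forall>y\<in>S. g x y = 0)"
  unfolding perp_def by simp

lemma subspace_perp: "subspace (perp S)"
  unfolding subspace_def perp_def by simp

lemma perp_span: "x \<in> perp B \<Longrightarrow> y \<in> span B \<Longrightarrow> g x y = 0"
  using linear_eq_0_on_span[OF g.linear_right] unfolding perp_def by blast

text \<open>For a Euclidean orthonormal basis \<open>B\<close> of \<open>S\<close>, the map \<open>y \<mapsto> \<Sum>b\<in>B. g y b *\<^sub>R b\<close> is
  injective on \<open>S\<close>, hence maps \<open>S\<close> onto \<open>S\<close>.\<close>
lemma nondegenerate_on_represent: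
  assumes S: "subspace S" and nd: "nondegenerate_on g S" and \<phi>: "linear \<phi>"
  shows "\<exists>s\<in>S. \<forall>w\<in>S. g s w = \<phi> w"
proof -
  obtain B where BS: "B \<subseteq> S" and orth: "pairwise orthogonal B" and unit: "\<forall>b\<in>B. norm b = 1"
    and indep: "independent B" and spanB: "span B = S"
    using orthonormal_basis_subspace[OF S] by metis
  have finB: "finite B" using indep by (rule independent_imp_finite)
  note coeff = inner_sum_orthonormal_basis[OF finB orth unit]
  define T where "T y = (\<Sum>b\<in>B. g y b *\<^sub>R b)" for y
  have linT: "linear T"
    by (rule linearI) (simp_all add: T_def scaleR_add_left sum.distrib scaleR_sum_right)
  have inj: "inj_on T S"
  proof (rule inj_onI)
    fix x y assume "x \<in> S" "y \<in> S" "T x = T y"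
    then have "g (x - y) b = 0" if "b \<in> B" for b
      using coeff[OF that, of "g x"] coeff[OF that, of "g y"] unfolding T_def by simp
    then have "\<forall>w\<in>S. g (x - y) w = 0" using perp_span spanB unfolding perp_def by blast
    moreover have "x - y \<in> S" using S \<open>x \<in> S\<close> \<open>y \<in> S\<close> by (rule subspace_diff)
    ultimately have "x - y = 0" using nd unfolding nondegenerate_on_def by blast
    then show "x = y" by simp
  qed
  have "T ` S \<subseteq> S"
    unfolding T_def using BS S by (auto intro!: subspace_sum subspace_scale)
  then have "T ` S = S" by (rule linear_inj_on_image_eq[OF linT S _ inj])
  moreover have "(\<Sum>b\<in>B. \<phi> b *\<^sub>R b) \<in> S"
    using BS S by (auto intro!: subspace_sum subspace_scale)
  ultimately obtain s where sS: "s \<in> S" and Ts: "T s = (\<Sum>b\<in>B. \<phi> b *\<^sub>R b)"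
    by (metis imageE)
  have "g s b = \<phi> b" if "b \<in> B" for b
    using coeff[OF that, of "g s"] coeff[OF that, of \<phi>] Ts unfolding T_def by simp
  then have "g s w = \<phi> w" if "w \<in> span B" for w
    using linear_eq_on_span[OF g.linear_right \<phi> _ that] by blast
  with sS spanB show ?thesis by blast
qed

lemma nondegenerate_on_split:
  assumes "subspace S" "nondegenerate_on g S"
  shows "\<exists>s\<in>S. x - s \<in> perp S"
proof -
  obtain s where "s \<in> S" and s: "\<forall>w\<in>S. g s w = g x w"
    using nondegenerate_on_represent[OF assms g.linear_right] by blast
  moreover have "x - s \<in> perp S" unfolding perp_def using s by simp
  ultimately show ?thesis by blast
qed

definition pos_def_on :: "'a set \<Rightarrow> bool" where
  "pos_def_on S \<longleftrightarrow> (\<forall>x\<in>S. x \<noteq> 0 \<longrightarrow> 0 < g x x)"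

definition orthonormal :: "'a set \<Rightarrow> bool" where
  "orthonormal B \<longleftrightarrow> (\<forall>b\<in>B. g b b = 1) \<and> (\<forall>b\<in>B. \<forall>c\<in>B. b \<noteq> c \<longrightarrow> g b c = 0)"

lemma pos_def_on_subset: "pos_def_on T \<Longrightarrow> S \<subseteq> T \<Longrightarrow> pos_def_on S"
  unfolding pos_def_on_def by blast

lemma orthonormal_Un:
  assumes "orthonormal A" "orthonormal B" "\<And>a b. a \<in> A \<Longrightarrow> b \<in> B \<Longrightarrow> g a b = 0"
  shows "orthonormal (A \<union> B)"
  using assms sym unfolding orthonormal_def by (metis Un_iff)

lemma orthonormal_insert:
  assumes S: "subspace S" and e: "e \<in> S" "g e e = 1"
    and B: "S \<inter> perp {e} \<subseteq> span B" "B \<subseteq> perp {e}" "orthonormal B"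
  shows "S \<subseteq> span (insert e B)" and "orthonormal (insert e B)"
proof
  fix x assume "x \<in> S"
  then have "x - g x e *\<^sub>R e \<in> S \<inter> perp {e}"
    using S e unfolding perp_def by (simp add: subspace_diff subspace_scale)
  then have "x - g x e *\<^sub>R e \<in> span (insert e B)" using B(1) span_mono[of B "insert e B"] by auto
  moreover have "g x e *\<^sub>R e \<in> span (insert e B)" by (simp add: span_base span_scale)
  ultimately have "(x - g x e *\<^sub>R e) + g x e *\<^sub>R e \<in> span (insert e B)" by (rule span_add)
  then show "x \<in> span (insert e B)" by simp
next
  have "g e b = 0" if "b \<in> B" for b using B(2) that sym[of e b] unfolding perp_def by auto
  then have "orthonormal ({e} \<union> B)"
    using e(2) B(3) by (intro orthonormal_Un) (auto simp: orthonormal_def)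
  then show "orthonormal (insert e B)" by simp
qed

lemma pos_def_on_orthonormal_basis:
  assumes "subspace S" "pos_def_on S"
  shows "\<exists>B. finite B \<and> B \<subseteq> S \<and> S \<subseteq> span B \<and> orthonormal B"
  using assms
proof (induction "dim S" arbitrary: S rule: less_induct)
  case less
  show ?case
  proof (cases "S \<subseteq> {0}")
    case True
    then show ?thesis by (intro exI[of _ "{}"]) (auto simp: orthonormal_def)
  next
    case False
    then obtain v where vS: "v \<in> S" and "v \<noteq> 0" by auto
    then have gv: "0 < g v v" using less.prems(2) unfolding pos_def_on_def by blast
    define e where "e = (1 / sqrt (g v v)) *\<^sub>R v"
    have ee: "g e e = 1" using gv unfolding e_def by (simp add: power2_eq_square[symmetric])
    have eS: "e \<in> S" unfolding e_def using vS less.prems(1) by (simp add: subspace_scale)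
    define S' where "S' = S \<inter> perp {e}"
    have sub': "subspace S'" unfolding S'_def by (intro subspace_inter less.prems(1) subspace_perp)
    have S'S: "S' \<subseteq> S" unfolding S'_def by auto
    have "e \<notin> S'" using ee unfolding S'_def perp_def by auto
    then have "S' \<subset> S" using S'S eS by blast
    moreover have "span S' = S'" "span S = S"
      using sub' less.prems(1) by (simp_all only: span_eq_iff)
    ultimately have "span S' \<subset> span S" by (simp only:)
    then have "dim S' < dim S" by (rule dim_psubset)
    then obtain B' where B': "finite B'" "B' \<subseteq> S'" "S' \<subseteq> span B'" "orthonormal B'"
      using less.hyps sub' pos_def_on_subset[OF less.prems(2) S'S] by blast
    have "B' \<subseteq> perp {e}" using B'(2) unfolding S'_def by auto
    note ins = orthonormal_insert[OF less.prems(1) eS ee B'(3)[unfolded S'_def] this B'(4)]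
    show ?thesis using B'(1,2) eS S'S ins by (intro exI[of _ "insert e B'"]) auto
  qed
qed

end

locale lorentz_form = sym_form +
  fixes e0 :: 'a
  assumes timelike_e0: "g e0 e0 < 0" and pos_def_perp_e0: "pos_def_on (perp {e0})"
begin

text \<open>If \<open>x \<perp> t\<close> were not spacelike, the combination \<open>g x e0 *\<^sub>R t - g t e0 *\<^sub>R x\<close>,
  which is orthogonal to \<open>e0\<close>, would have nonpositive square and hence vanish.\<close>
lemma pos_def_on_perp_timelike:
  assumes tt: "g t t < 0"
  shows "pos_def_on (perp {t})"
  unfolding pos_def_on_def
proof (intro ballI impI)
  fix x assume "x \<in> perp {t}" and x0: "x \<noteq> 0"
  then have xt: "g x t = 0" and tx: "g t x = 0" using sym unfolding perp_def by auto
  have pos: "0 < g y y" if "g y e0 = 0" "y \<noteq> 0" for y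
    using pos_def_perp_e0 that unfolding pos_def_on_def perp_def by auto
  have te: "g t e0 \<noteq> 0" using pos[of t] tt by force
  show "0 < g x x"
  proof (rule ccontr)
    assume "\<not> 0 < g x x"
    define y where "y = g x e0 *\<^sub>R t - g t e0 *\<^sub>R x"
    have "g y e0 = 0" unfolding y_def by (simp add: algebra_simps)
    moreover have "g y y = (g x e0)\<^sup>2 * g t t + (g t e0)\<^sup>2 * g x x"
      unfolding y_def using xt tx by (simp add: algebra_simps power2_eq_square)
    moreover have "\<dots> \<le> 0"
      using tt \<open>\<not> 0 < g x x\<close> by (simp add: add_nonpos_nonpos mult_nonneg_nonpos)
    ultimately have "y = 0" using pos by force
    then have "g t e0 *\<^sub>R x = g x e0 *\<^sub>R t" unfolding y_def by simp
    then have "g t e0 * g x t = g x e0 * g t t" by (metis g.simps(7) real_scaleR_def)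
    then have "g x e0 = 0" using xt tt by simp
    then have "x = 0" using \<open>g t e0 *\<^sub>R x = _\<close> te by simp
    with x0 show False ..
  qed
qed

lemma timelike_normalize:
  assumes "g t t < 0"
  shows "g ((1 / sqrt (- g t t)) *\<^sub>R t) ((1 / sqrt (- g t t)) *\<^sub>R t) = -1"
  using assms by (simp add: power2_eq_square[symmetric])

end

locale nondeg_form = sym_form +
  assumes nondeg: "nondegenerate g"
begin

lemma eq_if_g_eq: "(\<And>w. g x w = g y w) \<Longrightarrow> x = y"
  using nondeg unfolding nondegenerate_def by (metis eq_iff_diff_eq_0 g.simps(3))

definition sharp :: "('a \<Rightarrow> real) \<Rightarrow> 'a" where
  "sharp \<phi> = (THE y. \<forall>x. g y x = \<phi> x)"

lemma g_sharp:
  assumes "linear \<phi>"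
  shows "g (sharp \<phi>) x = \<phi> x"
proof -
  have "nondegenerate_on g UNIV" using nondeg unfolding nondegenerate_def nondegenerate_on_def by blast
  then obtain y where y: "\<forall>x. g y x = \<phi> x"
    using nondegenerate_on_represent[OF subspace_UNIV _ assms] by blast
  then have "\<forall>x. g (sharp \<phi>) x = \<phi> x"
    unfolding sharp_def by (rule theI) (use y eq_if_g_eq in metis)
  then show ?thesis ..
qed

definition dual_basis :: "'a set \<Rightarrow> ('a \<Rightarrow> 'a) \<Rightarrow> bool" where
  "dual_basis I d \<longleftrightarrow> finite I \<and> (\<forall>a\<in>I. \<forall>b\<in>I. g a (d b) = (if a = b then 1 else 0))
     \<and> (\<forall>x. x = (\<Sum>a\<in>I. g x (d a) *\<^sub>R a))"

lemma dual_basisI: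
  assumes fin: "finite I"
    and biorth: "\<And>a b. a \<in> I \<Longrightarrow> b \<in> I \<Longrightarrow> g a (d b) = (if a = b then 1 else 0)"
    and complete: "\<And>x. (\<And>a. a \<in> I \<Longrightarrow> g x (d a) = 0) \<Longrightarrow> x = 0"
  shows "dual_basis I d"
  unfolding dual_basis_def
proof (intro conjI allI ballI fin biorth)
  fix x
  have "g (x - (\<Sum>a\<in>I. g x (d a) *\<^sub>R a)) (d b) = 0" if "b \<in> I" for b
  proof -
    have "(\<Sum>a\<in>I. g x (d a) * g a (d b)) = (\<Sum>a\<in>I. if a = b then g x (d a) else 0)"
      by (rule sum.cong) (simp_all add: biorth that)
    with fin that show ?thesis by simp
  qed
  then have "x - (\<Sum>a\<in>I. g x (d a) *\<^sub>R a) = 0" by (rule complete)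
  then show "x = (\<Sum>a\<in>I. g x (d a) *\<^sub>R a)" by simp
qed

lemma dual_basis_pseudo_orthonormal:
  assumes fin: "finite I" and sign: "\<And>a. a \<in> I \<Longrightarrow> g a a = 1 \<or> g a a = -1"
    and orth: "\<And>a b. a \<in> I \<Longrightarrow> b \<in> I \<Longrightarrow> a \<noteq> b \<Longrightarrow> g a b = 0"
    and complete: "\<And>x. (\<And>a. a \<in> I \<Longrightarrow> g x a = 0) \<Longrightarrow> x = 0"
  shows "dual_basis I (\<lambda>a. g a a *\<^sub>R a)"
proof (rule dual_basisI[OF fin])
  fix a b assume "a \<in> I" "b \<in> I"
  moreover have "g b b * g b b = 1" using sign[OF \<open>b \<in> I\<close>] by auto
  ultimately show "g a (g b b *\<^sub>R b) = (if a = b then 1 else 0)" using orth by auto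
next
  fix x assume x: "\<And>a. a \<in> I \<Longrightarrow> g x (g a a *\<^sub>R a) = 0"
  show "x = 0"
  proof (rule complete)
    fix a assume "a \<in> I"
    then show "g x a = 0" using x[of a] sign[of a] by auto
  qed
qed

lemma dual_basis_finite: "dual_basis I d \<Longrightarrow> finite I"
  unfolding dual_basis_def by blast

lemma dual_basis_diag: "dual_basis I d \<Longrightarrow> a \<in> I \<Longrightarrow> g a (d a) = 1"
  unfolding dual_basis_def by simp

lemma dual_basis_expand: "dual_basis I d \<Longrightarrow> x = (\<Sum>a\<in>I. g x (d a) *\<^sub>R a)"
  unfolding dual_basis_def by blast

lemma dual_basis_g: "dual_basis I d \<Longrightarrow> g x y = (\<Sum>a\<in>I. g x (d a) * g a y)"
  by (subst dual_basis_expand, assumption) simp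

lemma dual_basis_Basis: "\<exists>d. dual_basis Basis d"
proof
  define d where "d b = sharp (\<lambda>x. x \<bullet> b)" for b :: 'a
  have gd: "g x (d b) = x \<bullet> b" for x b
    unfolding d_def using g_sharp[of "\<lambda>x. x \<bullet> b"] sym by (simp add: bounded_linear_inner_left bounded_linear.linear)
  show "dual_basis Basis d"
    unfolding dual_basis_def gd by (auto simp: inner_Basis euclidean_representation)
qed

text \<open>Expanding \<open>d a\<close> in the dual basis turns either side into the same double sum
  weighted by the symmetric Gram matrix \<open>g (d a) (d b)\<close>.\<close>
lemma dual_basis_swap:
  assumes db: "dual_basis I d"
    and l1: "\<And>x. linear (\<beta> x)" and l2: "\<And>y. linear (\<lambda>x. \<beta> x y)"
  shows "(\<Sum>a\<in>I. \<beta> a (d a)) = (\<Sum>a\<in>I. (\<beta> (d a) a :: real))"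
proof -
  have e1: "\<beta> a (d a) = (\<Sum>b\<in>I. g (d a) (d b) * \<beta> a b)" for a
    by (subst dual_basis_expand[OF db, of "d a"])
      (simp add: linear_sum[OF l1] linear_scale[OF l1])
  have e2: "\<beta> (d a) a = (\<Sum>b\<in>I. g (d a) (d b) * \<beta> b a)" for a
    using linear_sum[OF l2, of "\<lambda>b. g (d a) (d b) *\<^sub>R b" I] linear_scale[OF l2]
    by (subst dual_basis_expand[OF db, of "d a"]) simp
  have "(\<Sum>a\<in>I. \<beta> (d a) a) = (\<Sum>b\<in>I. \<Sum>a\<in>I. g (d b) (d a) * \<beta> b a)"
    unfolding e2 by (subst sum.swap) (simp add: sym)
  also have "\<dots> = (\<Sum>a\<in>I. \<beta> a (d a))" by (simp add: e1)
  finally show ?thesis by simp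
qed

lemma trace_dual_basis:
  assumes db: "dual_basis I d" and M: "linear M"
  shows "trace M = (\<Sum>a\<in>I. g (M a) (d a))"
proof -
  have "M b \<bullet> b = (\<Sum>a\<in>I. g (M b) (d a) * (a \<bullet> b))" for b
    by (subst dual_basis_expand[OF db, of "M b"]) (simp add: inner_sum_left)
  then have "trace M = (\<Sum>a\<in>I. \<Sum>b\<in>Basis. g (M b) (d a) * (a \<bullet> b))"
    unfolding trace_def by (simp add: sum.swap[of _ I])
  also have "\<dots> = (\<Sum>a\<in>I. g (M a) (d a))"
  proof (rule sum.cong[OF refl])
    fix a
    have "g (M a) (d a) = g (M (\<Sum>b\<in>Basis. (a \<bullet> b) *\<^sub>R b)) (d a)"
      by (simp add: euclidean_representation)
    then show "(\<Sum>b\<in>Basis. g (M b) (d a) * (a \<bullet> b)) = g (M a) (d a)"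
      by (simp add: linear_sum[OF M] linear_scale[OF M] mult.commute)
  qed
  finally show ?thesis .
qed

definition adj :: "('a \<Rightarrow> 'a) \<Rightarrow> 'a \<Rightarrow> 'a" where
  "adj M v = sharp (\<lambda>x. g v (M x))"

lemma g_adj: "linear M \<Longrightarrow> g (adj M v) x = g v (M x)"
  unfolding adj_def
  by (rule g_sharp) (simp add: linear_compose[of M "g v", unfolded o_def] g.linear_right)

lemma g_adj': "linear M \<Longrightarrow> g x (adj M v) = g (M x) v"
  using g_adj sym by metis

lemma linear_adj: "linear M \<Longrightarrow> linear (adj M)"
  by (rule linearI; rule eq_if_g_eq) (simp_all add: g_adj)

lemma adj_adj: "linear M \<Longrightarrow> adj (adj M) = M"
  by (rule ext, rule eq_if_g_eq) (simp add: g_adj[OF linear_adj] g_adj')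

lemma adj_comp:
  assumes "linear P" "linear Q"
  shows "adj (\<lambda>x. P (Q x)) v = adj Q (adj P v)"
proof (rule eq_if_g_eq)
  have "linear (\<lambda>x. P (Q x))" using linear_compose[OF assms(2,1)] by (simp add: o_def)
  then show "g (adj (\<lambda>x. P (Q x)) v) w = g (adj Q (adj P v)) w" for w
    by (simp add: g_adj assms)
qed

lemma trace_adj:
  assumes M: "linear M"
  shows "trace (adj M) = trace M"
proof -
  obtain d where db: "dual_basis Basis d" using dual_basis_Basis ..
  have "trace (adj M) = (\<Sum>a\<in>Basis. g (adj M a) (d a))"
    by (rule trace_dual_basis[OF db linear_adj[OF M]])
  also have "\<dots> = (\<Sum>a\<in>Basis. g (M (d a)) a)"
    by (simp add: g_adj[OF M] sym[of a "M _" for a])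
  also have "\<dots> = (\<Sum>a\<in>Basis. g (M a) (d a))"
  proof -
    have l: "linear (\<lambda>y. g (M y) x)" for x
      using linear_compose[OF M g.linear_left] by (simp add: o_def)
    have "(\<Sum>a\<in>Basis. (\<lambda>x y. g (M y) x) a (d a)) = (\<Sum>a\<in>Basis. (\<lambda>x y. g (M y) x) (d a) a)"
      by (rule dual_basis_swap[OF db]) (simp_all only: l g.linear_right)
    then show ?thesis by simp
  qed
  also have "\<dots> = trace M" using trace_dual_basis[OF db M] by simp
  finally show ?thesis .
qed

end

section \<open>Levi-Civita product and Ricci curvature\<close>

locale metric_lie_algebra = nondeg_form g for g +
  fixes br :: "'a \<Rightarrow> 'a \<Rightarrow> 'a"
  assumes lie: "lie_algebra br"
begin

sublocale br: bilinear_map br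
  using lie by unfold_locales (simp add: lie_algebra_def)

lemma bracket_self[simp]: "br x x = 0"
  using lie unfolding lie_algebra_def by blast

lemma jacobi: "br x (br y z) + br y (br z x) + br z (br x y) = 0"
  using lie unfolding lie_algebra_def by blast

lemma bracket_swap: "br y x = - br x y"
proof -
  have "br (x + y) (x + y) = br x x + br x y + br y x + br y y"
    by (simp add: algebra_simps del: bracket_self)
  then have "br x y + br y x = 0" by simp
  then show ?thesis by (metis add.commute eq_neg_iff_add_eq_0)
qed

definition ad_star :: "'a \<Rightarrow> 'a \<Rightarrow> 'a" where
  "ad_star x = adj (br x)"

text \<open>The operator \<open>j(y)\<close> of the theory of two-step nilpotent metric Lie algebras,
  \<open>g (j(y) w) z = g y [w, z]\<close>.\<close>
definition j_op :: "'a \<Rightarrow> 'a \<Rightarrow> 'a" where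
  "j_op y w = adj (br w) y"

lemma g_ad_star: "g (ad_star x v) w = g v (br x w)"
  unfolding ad_star_def by (rule g_adj[OF br.linear_right])

lemma g_j_op: "g (j_op y w) z = g y (br w z)"
  unfolding j_op_def by (rule g_adj[OF br.linear_right])

lemma g_j_op': "g z (j_op y w) = g y (br w z)"
  using g_j_op sym by metis

lemma g_j_op_skew: "g (j_op y v) w = - g v (j_op y w)"
  by (simp add: g_j_op g_j_op' bracket_swap[of v])

lemma linear_ad_star: "linear (ad_star x)"
  unfolding ad_star_def by (rule linear_adj[OF br.linear_right])

lemma linear_j_op: "linear (j_op y)"
  by (rule linearI; rule eq_if_g_eq) (simp_all add: g_j_op)

lemma adj_ad_star: "adj (ad_star x) = br x"
  unfolding ad_star_def by (rule adj_adj[OF br.linear_right])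

lemma adj_j_op: "adj (j_op y) v = - j_op y v"
proof (rule eq_if_g_eq)
  fix z
  have "g (adj (j_op y) v) z = g y (br z v)"
    by (simp add: g_adj[OF linear_j_op] sym[of v] g_j_op)
  also have "\<dots> = g (- j_op y v) z" by (simp add: g_j_op bracket_swap[of z])
  finally show "g (adj (j_op y) v) z = g (- j_op y v) z" .
qed

lemma trace_j_op: "trace (j_op y) = 0"
proof -
  have "adj (j_op y) = (\<lambda>v. - j_op y v)" by (rule ext) (rule adj_j_op)
  then show ?thesis using trace_adj[OF linear_j_op, of y] by (simp add: trace_neg)
qed

lemma LC_eq: "LC br g u v = (1/2) *\<^sub>R (br u v - ad_star u v - j_op u v)"
proof -
  let ?P = "\<lambda>x. \<forall>w. 2 * g x w = g (br u v) w + g (br w u) v + g (br w v) u"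
  have "g (br w u) v = - g v (br u w)" "g (br w v) u = - g u (br v w)" for w
    by (simp_all add: bracket_swap[of w] sym[of "br _ _"])
  then have "?P ((1/2) *\<^sub>R (br u v - ad_star u v - j_op u v))"
    by (simp add: g_ad_star g_j_op)
  moreover have "x = y" if "?P x" "?P y" for x y
  proof (rule eq_if_g_eq)
    fix w show "g x w = g y w" using that[THEN spec[of _ w]] by linarith
  qed
  ultimately show ?thesis unfolding LC_def by (intro the_equality) blast+
qed

lemma LC_swap: "LC br g w y = - (1/2) *\<^sub>R (br y w + j_op y w + ad_star y w)"
proof -
  have "ad_star w y = j_op y w" "j_op w y = ad_star y w"
    unfolding ad_star_def j_op_def by simp_all
  then show ?thesis by (simp add: LC_eq bracket_swap[of w y] algebra_simps)
qed

lemma linear_LC: "linear (LC br g x)"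
  by (rule linearI)
    (simp_all add: LC_eq linear_add[OF linear_ad_star] linear_add[OF linear_j_op]
      linear_scale[OF linear_ad_star] linear_scale[OF linear_j_op] algebra_simps)

lemma linear_curv: "linear (\<lambda>v. curv br g u w v)"
proof -
  have "linear (\<lambda>v. LC br g x (LC br g y v))" for x y
    using linear_compose[OF linear_LC linear_LC] by (simp add: o_def)
  then show ?thesis
    unfolding curv_def by (intro linear_compose_sub linear_LC)
qed

lemma g_ricci: "g (ricci br g u) v = trace (\<lambda>w. curv br g u w v)"
proof -
  have "linear (\<lambda>v. trace (\<lambda>w. curv br g u w v))"
    by (rule linearI)
      (simp_all add: linear_add[OF linear_curv] linear_scale[OF linear_curv] trace_add trace_scaleR)
  from g_sharp[OF this] show ?thesis unfolding sharp_def ricci_def .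
qed

lemma trace_comp_LC_left:
  assumes "linear P"
  shows "trace (\<lambda>w. P (LC br g w y))
    = - (1/2) * (trace (\<lambda>w. P (br y w)) + trace (\<lambda>w. P (j_op y w)) + trace (\<lambda>w. P (ad_star y w)))"
proof -
  have "(\<lambda>w. P (LC br g w y)) = (\<lambda>w. - (1/2) *\<^sub>R ((P (br y w) + P (j_op y w)) + P (ad_star y w)))"
    by (simp add: LC_swap linear_add[OF assms] linear_scale[OF assms] linear_neg[OF assms])
  then show ?thesis by (simp add: trace_scaleR trace_add trace_neg)
qed

lemma trace_adj_comp:
  assumes "linear P" "linear Q"
  shows "trace (\<lambda>w. adj P (adj Q w)) = trace (\<lambda>w. Q (P w))"
proof -
  have PQ: "linear (\<lambda>w. Q (P w))" using linear_compose[OF assms] by (simp add: o_def)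
  have "(\<lambda>w. adj P (adj Q w)) = adj (\<lambda>w. Q (P w))"
    by (rule ext) (simp add: adj_comp[OF assms(2,1)])
  then show ?thesis by (simp add: trace_adj[OF PQ])
qed

lemma trace_ad_star_bracket_swap:
  "trace (\<lambda>w. ad_star x (br y w)) = trace (\<lambda>w. ad_star y (br x w))"
  using trace_adj_comp[OF br.linear_right linear_ad_star, of x y]
  by (simp add: adj_ad_star ad_star_def[symmetric])

lemma trace_ad_star_ad_star: "trace (\<lambda>w. ad_star x (ad_star y w)) = trace (\<lambda>w. br y (br x w))"
  using trace_adj_comp[OF br.linear_right br.linear_right, of x y] by (simp add: ad_star_def)

lemma trace_ad_star_j_op: "trace (\<lambda>w. ad_star x (j_op y w)) = - trace (\<lambda>w. j_op y (br x w))"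
proof -
  have "(\<lambda>w. ad_star x (j_op y w)) = (\<lambda>w. - adj (br x) (adj (j_op y) w))"
    by (rule ext) (simp add: adj_j_op linear_neg[OF linear_adj[OF br.linear_right]] ad_star_def)
  then show ?thesis
    using trace_adj_comp[OF br.linear_right linear_j_op, of x y] by (simp add: trace_neg)
qed

lemma trace_j_op_ad_star: "trace (\<lambda>w. j_op x (ad_star y w)) = - trace (\<lambda>w. j_op x (br y w))"
proof -
  have "(\<lambda>w. j_op x (ad_star y w)) = (\<lambda>w. - adj (j_op x) (adj (br y) w))"
    by (rule ext) (simp add: adj_j_op ad_star_def)
  then have "trace (\<lambda>w. j_op x (ad_star y w)) = - trace (\<lambda>w. br y (j_op x w))"
    using trace_adj_comp[OF linear_j_op br.linear_right, of x y] by (simp add: trace_neg)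
  also have "\<dots> = - trace (\<lambda>w. j_op x (br y w))"
    using trace_comp_commute[OF br.linear_right linear_j_op, of y x] by simp
  finally show ?thesis .
qed

lemma trace_curv:
  assumes tr_ad: "\<And>z. trace (br z) = 0" and killing: "\<And>x y. trace (\<lambda>w. br x (br y w)) = 0"
  shows "trace (\<lambda>w. curv br g x w y)
    = - (1/2) * trace (\<lambda>w. ad_star y (br x w)) - (1/4) * trace (\<lambda>w. j_op x (j_op y w))"
proof -
  let ?m = "LC br g x y"
  have T1: "trace (\<lambda>w. LC br g (br x w) y)
      = - (1/2) * (trace (\<lambda>w. br y (br x w)) + trace (\<lambda>w. j_op y (br x w)) + trace (\<lambda>w. ad_star y (br x w)))"
  proof -
    have "(\<lambda>w. LC br g (br x w) y)
        = (\<lambda>w. - (1/2) *\<^sub>R ((br y (br x w) + j_op y (br x w)) + ad_star y (br x w)))"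
      by (simp add: LC_swap)
    then show ?thesis by (simp add: trace_scaleR trace_add trace_neg)
  qed
  have T2: "trace (\<lambda>w. LC br g x (LC br g w y))
      = (1/2) * (trace (\<lambda>w. br x (LC br g w y)) - trace (\<lambda>w. ad_star x (LC br g w y))
          - trace (\<lambda>w. j_op x (LC br g w y)))"
  proof -
    have "(\<lambda>w. LC br g x (LC br g w y))
        = (\<lambda>w. (1/2) *\<^sub>R ((br x (LC br g w y) - ad_star x (LC br g w y)) - j_op x (LC br g w y)))"
      by (rule ext) (rule LC_eq)
    then show ?thesis by (simp add: trace_scaleR trace_diff)
  qed
  have T3: "trace (\<lambda>w. LC br g w ?m) = 0"
    using trace_comp_LC_left[OF linear_ident, of ?m] trace_adj[OF br.linear_right] tr_ad trace_j_op
    by (simp add: ad_star_def)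
  have "trace (\<lambda>w. curv br g x w y)
      = trace (\<lambda>w. LC br g (br x w) y) - (trace (\<lambda>w. LC br g x (LC br g w y)) - trace (\<lambda>w. LC br g w ?m))"
    unfolding curv_def by (simp add: trace_diff)
  also have "\<dots> = - (1/2) * trace (\<lambda>w. ad_star y (br x w)) - (1/4) * trace (\<lambda>w. j_op x (j_op y w))"
    unfolding T1 T2 T3 trace_comp_LC_left[OF br.linear_right] trace_comp_LC_left[OF linear_ad_star]
      trace_comp_LC_left[OF linear_j_op] trace_ad_star_bracket_swap trace_ad_star_ad_star
      trace_ad_star_j_op trace_j_op_ad_star killing
      trace_comp_commute[OF br.linear_right linear_ad_star] trace_comp_commute[OF br.linear_right linear_j_op]
    by (simp add: algebra_simps)
  finally show ?thesis .
qed

end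

section \<open>Weighted sums of structure constants\<close>

lemma weighted_structure_sum:
  fixes P :: "'i \<Rightarrow> 'i \<Rightarrow> 'i \<Rightarrow> real"
  assumes swap: "\<And>a b c. P a b c = P a c b"
    and diag: "\<And>a. a \<in> I \<Longrightarrow>
      lam = - (1/2) * (\<Sum>b\<in>I. \<Sum>c\<in>I. P c a b) + (1/4) * (\<Sum>b\<in>I. \<Sum>c\<in>I. P a b c)"
  shows "4 * lam * (\<Sum>a\<in>I. t a) = (\<Sum>a\<in>I. \<Sum>b\<in>I. \<Sum>c\<in>I. (t a - t b - t c) * P a b c)"
proof -
  define SA where "SA = (\<Sum>a\<in>I. \<Sum>b\<in>I. \<Sum>c\<in>I. t a * P a b c)"
  define SB where "SB = (\<Sum>a\<in>I. \<Sum>b\<in>I. \<Sum>c\<in>I. t b * P a b c)"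
  define SC where "SC = (\<Sum>a\<in>I. \<Sum>b\<in>I. \<Sum>c\<in>I. t c * P a b c)"
  have rotate: "(\<Sum>a\<in>I. \<Sum>b\<in>I. \<Sum>c\<in>I. f a b c) = (\<Sum>c\<in>I. \<Sum>a\<in>I. \<Sum>b\<in>I. f a b c)"
    for f :: "'i \<Rightarrow> 'i \<Rightarrow> 'i \<Rightarrow> real"
  proof -
    have "(\<Sum>a\<in>I. \<Sum>b\<in>I. \<Sum>c\<in>I. f a b c) = (\<Sum>a\<in>I. \<Sum>c\<in>I. \<Sum>b\<in>I. f a b c)"
      by (rule sum.cong[OF refl]) (rule sum.swap)
    also have "\<dots> = (\<Sum>c\<in>I. \<Sum>a\<in>I. \<Sum>b\<in>I. f a b c)" by (rule sum.swap)
    finally show ?thesis .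
  qed
  have X: "(\<Sum>a\<in>I. \<Sum>b\<in>I. \<Sum>c\<in>I. t a * P c a b) = SB"
    unfolding SB_def by (rule rotate)
  have "SB = SC"
    unfolding SB_def SC_def by (rule sum.cong[OF refl], subst sum.swap) (simp add: swap)
  have "4 * lam * (\<Sum>a\<in>I. t a) = (\<Sum>a\<in>I. t a * (4 * lam))"
    by (simp add: sum_distrib_left sum_distrib_right mult.commute)
  also have "\<dots> = (\<Sum>a\<in>I. - 2 * (t a * (\<Sum>b\<in>I. \<Sum>c\<in>I. P c a b)) + t a * (\<Sum>b\<in>I. \<Sum>c\<in>I. P a b c))"
    by (rule sum.cong) (simp_all add: diag algebra_simps)
  also have "\<dots> = - 2 * SB + SA"
    unfolding X[symmetric] SA_def by (simp add: sum.distrib sum_distrib_left)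
  also have "\<dots> = SA - SB - SC" using \<open>SB = SC\<close> by simp
  also have "\<dots> = (\<Sum>a\<in>I. \<Sum>b\<in>I. \<Sum>c\<in>I. (t a - t b - t c) * P a b c)"
    unfolding SA_def SB_def SC_def by (simp add: left_diff_distrib sum_subtractf)
  finally show ?thesis .
qed

context metric_lie_algebra
begin

text \<open>For an orthonormal basis, \<open>struct_prod\<close> is the squared structure constant
  \<open>(c\<^sub>b\<^sub>c\<^sup>a)\<^sup>2\<close> up to the sign \<open>g a a * g b b * g c c\<close>.\<close>
definition struct_prod :: "('a \<Rightarrow> 'a) \<Rightarrow> 'a \<Rightarrow> 'a \<Rightarrow> 'a \<Rightarrow> real" where
  "struct_prod d a b c = g (br b c) (d a) * g (br (d b) (d c)) a"

lemma struct_prod_swap: "struct_prod d a b c = struct_prod d a c b"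
  unfolding struct_prod_def by (simp add: bracket_swap[of c] bracket_swap[of "d c"])

lemma trace_ad_star_dual_basis:
  assumes db: "dual_basis I d"
  shows "trace (\<lambda>w. ad_star (d a) (br a w)) = (\<Sum>b\<in>I. \<Sum>c\<in>I. struct_prod d c a b)"
proof -
  have "trace (\<lambda>w. ad_star (d a) (br a w)) = (\<Sum>b\<in>I. g (ad_star (d a) (br a b)) (d b))"
    using trace_dual_basis[OF db linear_compose[OF br.linear_right linear_ad_star]] by (simp add: o_def)
  also have "\<dots> = (\<Sum>b\<in>I. \<Sum>c\<in>I. struct_prod d c a b)"
  proof (rule sum.cong[OF refl])
    fix b
    show "g (ad_star (d a) (br a b)) (d b) = (\<Sum>c\<in>I. struct_prod d c a b)"
      unfolding g_ad_star struct_prod_def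
      by (subst dual_basis_g[OF db]) (simp add: sym[of "br (d a) (d b)"])
  qed
  finally show ?thesis .
qed

lemma trace_j_op_dual_basis:
  assumes db: "dual_basis I d"
  shows "trace (\<lambda>w. j_op a (j_op (d a) w)) = - (\<Sum>b\<in>I. \<Sum>c\<in>I. struct_prod d a b c)"
proof -
  have "g (j_op a (j_op (d a) b)) (d b) = - (\<Sum>c\<in>I. struct_prod d a b c)" for b
  proof -
    have "g (j_op a (j_op (d a) b)) (d b) = - g (j_op (d a) b) (j_op a (d b))"
      by (rule g_j_op_skew)
    also have "\<dots> = - (\<Sum>c\<in>I. g (d a) (br b (d c)) * g a (br (d b) c))"
      by (subst dual_basis_g[OF db]) (simp add: g_j_op g_j_op')
    also have "\<dots> = - (\<Sum>c\<in>I. g (d a) (br b c) * g a (br (d b) (d c)))"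
    proof -
      have "(\<Sum>c\<in>I. (\<lambda>p q. g (d a) (br b q) * g a (br (d b) p)) c (d c))
          = (\<Sum>c\<in>I. (\<lambda>p q. g (d a) (br b q) * g a (br (d b) p)) (d c) c)"
        by (rule dual_basis_swap[OF db]) (rule linearI; simp add: algebra_simps)+
      then show ?thesis by simp
    qed
    also have "\<dots> = - (\<Sum>c\<in>I. struct_prod d a b c)"
      unfolding struct_prod_def by (simp add: sym[of "d a"] sym[of a] mult.commute)
    finally show ?thesis .
  qed
  then show ?thesis
    using trace_dual_basis[OF db linear_compose[OF linear_j_op linear_j_op]]
    by (simp add: o_def sum_negf)
qed

lemma einstein_dual_basis_diag:
  assumes ein: "einstein br g lam" and db: "dual_basis I d" and a: "a \<in> I"
    and tr_ad: "\<And>z. trace (br z) = 0" and killing: "\<And>x y. trace (\<lambda>w. br x (br y w)) = 0"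
  shows "lam = - (1/2) * (\<Sum>b\<in>I. \<Sum>c\<in>I. struct_prod d c a b)
    + (1/4) * (\<Sum>b\<in>I. \<Sum>c\<in>I. struct_prod d a b c)"
proof -
  have "g a (d a) = 1" by (rule dual_basis_diag[OF db a])
  then have "lam = g (ricci br g a) (d a)" using ein unfolding einstein_def by simp
  then show ?thesis
    using trace_curv[OF tr_ad killing] g_ricci trace_ad_star_dual_basis[OF db] trace_j_op_dual_basis[OF db]
    by simp
qed

lemma einstein_nonneg_by_weights:
  assumes ein: "einstein br g lam" and db: "dual_basis I d"
    and tr_ad: "\<And>z. trace (br z) = 0" and killing: "\<And>x y. trace (\<lambda>w. br x (br y w)) = 0"
    and nonneg: "\<And>a b c. a \<in> I \<Longrightarrow> b \<in> I \<Longrightarrow> c \<in> I \<Longrightarrow> 0 \<le> (t a - t b - t c) * struct_prod d a b c"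
    and pos: "0 < (\<Sum>a\<in>I. t a)"
  shows "0 \<le> lam"
proof -
  have "4 * lam * (\<Sum>a\<in>I. t a) = (\<Sum>a\<in>I. \<Sum>b\<in>I. \<Sum>c\<in>I. (t a - t b - t c) * struct_prod d a b c)"
    by (rule weighted_structure_sum[OF struct_prod_swap einstein_dual_basis_diag[OF ein db _ tr_ad killing]])
  also have "\<dots> \<ge> 0" by (intro sum_nonneg nonneg)
  finally show ?thesis using pos by (simp add: zero_le_mult_iff)
qed

definition graded :: "'a set \<Rightarrow> ('a \<Rightarrow> 'a) \<Rightarrow> ('a \<Rightarrow> nat) \<Rightarrow> bool" where
  "graded I d l \<longleftrightarrow> (\<forall>a\<in>I. 0 < l a)
     \<and> (\<forall>a\<in>I. \<forall>b\<in>I. \<forall>c\<in>I. l a < l b + l c \<longrightarrow> g (br b c) (d a) = 0)"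

lemma graded_bracket_coeff:
  assumes db: "dual_basis I d" and gr: "graded I d l" and "a \<in> I" "e \<in> I" "l e \<le> l a"
  shows "g (br x a) (d e) = 0"
proof -
  have "g (br c a) (d e) = 0" if "c \<in> I" for c
  proof -
    have "l e < l c + l a" using gr that assms(5) unfolding graded_def by fastforce
    then show ?thesis using gr that assms(3,4) unfolding graded_def by blast
  qed
  then show ?thesis by (subst dual_basis_expand[OF db, of x]) simp
qed

lemma graded_trace_ad: "dual_basis I d \<Longrightarrow> graded I d l \<Longrightarrow> trace (br z) = 0"
  by (simp add: trace_dual_basis[OF _ br.linear_right] graded_bracket_coeff)

lemma graded_killing:
  assumes db: "dual_basis I d" and gr: "graded I d l"
  shows "trace (\<lambda>w. br x (br y w)) = 0"
proof -
  have "g (br x (br y a)) (d a) = 0" if a: "a \<in> I" for a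
  proof -
    have "g (br x (br y a)) (d a) = (\<Sum>e\<in>I. g (br y a) (d e) * g (br x e) (d a))"
      by (subst dual_basis_expand[OF db, of "br y a"]) simp
    also have "\<dots> = 0"
    proof (rule sum.neutral, intro ballI)
      fix e assume "e \<in> I"
      show "g (br y a) (d e) * g (br x e) (d a) = 0"
        using graded_bracket_coeff[OF db gr a \<open>e \<in> I\<close>, of y] graded_bracket_coeff[OF db gr \<open>e \<in> I\<close> a, of x]
        by (cases "l e \<le> l a") auto
    qed
    finally show ?thesis .
  qed
  then show ?thesis
    using trace_dual_basis[OF db linear_compose[OF br.linear_right br.linear_right]] by (simp add: o_def)
qed

text \<open>The timelike vector gets weight 2 whatever its level; with this choice a term
  of the weighted sum containing it has the right sign because all levels lie in \<open>{1, 2, 3}\<close>.\<close>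
lemma einstein_nonneg_timelike:
  assumes ein: "einstein br g lam" and fin: "finite I"
    and orth: "\<And>a b. a \<in> I \<Longrightarrow> b \<in> I \<Longrightarrow> a \<noteq> b \<Longrightarrow> g a b = 0"
    and complete: "\<And>x. (\<And>a. a \<in> I \<Longrightarrow> g x a = 0) \<Longrightarrow> x = 0"
    and t: "t \<in> I" "g t t = -1" and unit: "\<And>a. a \<in> I \<Longrightarrow> a \<noteq> t \<Longrightarrow> g a a = 1"
    and graded_id: "graded I (\<lambda>a. a) l" and level: "\<And>a. a \<in> I \<Longrightarrow> l a \<le> 3"
  shows "0 \<le> lam"
proof -
  have lpos: "\<And>a. a \<in> I \<Longrightarrow> 0 < l a"
    and grading: "\<And>a b c. a \<in> I \<Longrightarrow> b \<in> I \<Longrightarrow> c \<in> I \<Longrightarrow> l a < l b + l c \<Longrightarrow> g (br b c) a = 0"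
    using graded_id unfolding graded_def by auto
  define d where "d a = g a a *\<^sub>R a" for a
  define s where "s a = (if a = t then -1 else 1 :: real)" for a
  have gs: "g a a = s a" if "a \<in> I" for a using that t unit unfolding s_def by auto
  have sign: "g a a = 1 \<or> g a a = -1" if "a \<in> I" for a using gs[OF that] unfolding s_def by auto
  have db: "dual_basis I d"
    unfolding d_def using dual_basis_pseudo_orthonormal[OF fin sign orth complete] .
  have gr: "graded I d l"
    unfolding graded_def d_def using lpos grading by fastforce
  define w where "w a = (if a = t then 2 else real (l a))" for a
  show ?thesis
  proof (rule einstein_nonneg_by_weights[OF ein db graded_trace_ad[OF db gr] graded_killing[OF db gr]])
    fix a b c assume abc: "a \<in> I" "b \<in> I" "c \<in> I"
    have P: "struct_prod d a b c = (s a * s b * s c) * (g (br b c) a)\<^sup>2"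
      unfolding struct_prod_def d_def using gs abc sym[of a "br b c"]
      by (simp add: power2_eq_square)
    show "0 \<le> (w a - w b - w c) * struct_prod d a b c"
    proof (cases "g (br b c) a = 0")
      case False
      then have le: "l b + l c \<le> l a" using grading abc by force
      have "b \<noteq> t \<or> c \<noteq> t" using False by auto
      moreover have "0 \<le> (w a - w b - w c) * (s a * s b * s c)"
        using le level[OF abc(1)] lpos[OF abc(2)] lpos[OF abc(3)] calculation
        unfolding w_def s_def by auto
      ultimately show ?thesis unfolding P by (metis mult.assoc mult_nonneg_nonneg zero_le_power2)
    qed (simp add: P)
  next
    show "0 < sum w I"
      using fin t lpos unfolding w_def by (intro sum_pos) force+
  qed
qed

context
  fixes I d l n m
  assumes db: "dual_basis I d"
    and nm: "n \<in> I" "m \<in> I" "n \<noteq> m" "d n = m" "d m = n"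
    and other: "\<And>a. a \<in> I \<Longrightarrow> a \<noteq> n \<Longrightarrow> a \<noteq> m \<Longrightarrow> d a = a"
    and gr: "graded I d l" and level: "\<And>a. a \<in> I \<Longrightarrow> l a \<le> 3" and level_n: "l n = 2"
    and n_perp: "\<And>x y. g (br x y) n = 0"
begin

definition null_weight :: "'a \<Rightarrow> real" where
  "null_weight a = (if a = n \<or> a = m then 2 else real (l a))"

lemma null_level_pos: "a \<in> I \<Longrightarrow> 0 < l a"
  using gr unfolding graded_def by blast

lemma null_bracket_coeff: "a \<in> I \<Longrightarrow> b \<in> I \<Longrightarrow> c \<in> I \<Longrightarrow> l a < l b + l c \<Longrightarrow> g (br b c) (d a) = 0"
  using gr unfolding graded_def by blast

lemma struct_prod_null_pair: "a \<in> {n, m} \<Longrightarrow> struct_prod d a b c = 0"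
  using n_perp nm unfolding struct_prod_def by auto

lemma struct_prod_null_mixed:
  assumes a: "a \<in> I - {n, m}" and b: "b \<in> {n, m}" and c: "c \<in> I - {n, m}"
    and P: "struct_prod d a b c \<noteq> 0"
  shows "l a = 3 \<and> l c = 1"
proof -
  have da: "d a = a" and dc: "d c = c" using other a c by auto
  have "g (br n c) (d a) \<noteq> 0"
  proof (cases "b = n")
    case True
    then show ?thesis using P unfolding struct_prod_def by auto
  next
    case False
    then have "d b = n" using b nm(5) by auto
    then show ?thesis using P unfolding struct_prod_def da dc by auto
  qed
  then have "\<not> l a < l n + l c" using null_bracket_coeff[of a n c] a c nm(1) by blast
  then have "2 + l c \<le> l a" using level_n by simp
  then show ?thesis using level[of a] null_level_pos[of c] a c by auto
qed

text \<open>Terms with \<open>a \<in> {n, m}\<close> vanish because \<open>n\<close> is orthogonal to all brackets. A term pairing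
  one of \<open>n, m\<close> with another basis vector \<open>c\<close> survives only if \<open>l a = 3\<close> and \<open>l c = 1\<close>, where
  its weight vanishes.\<close>
lemma null_weight_term_nonneg:
  assumes abc: "a \<in> I" "b \<in> I" "c \<in> I"
  shows "0 \<le> (null_weight a - null_weight b - null_weight c) * struct_prod d a b c"
proof (cases "a \<in> {n, m} \<or> struct_prod d a b c = 0")
  case True
  then have "struct_prod d a b c = 0" using struct_prod_null_pair by blast
  then show ?thesis by simp
next
  case False
  then have a: "a \<in> I - {n, m}" and P: "struct_prod d a b c \<noteq> 0" using abc by auto
  consider "b \<notin> {n, m}" "c \<notin> {n, m}" | "b \<in> {n, m}" "c \<notin> {n, m}" | "b \<notin> {n, m}" "c \<in> {n, m}"
    | "b \<in> {n, m}" "c \<in> {n, m}" by blast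
  then show ?thesis
  proof cases
    case 1
    then have "struct_prod d a b c = (g (br b c) a)\<^sup>2"
      using a abc other unfolding struct_prod_def by (simp add: power2_eq_square)
    moreover have "l b + l c \<le> l a"
    proof (rule ccontr)
      assume "\<not> l b + l c \<le> l a"
      then have "g (br b c) (d a) = 0" using null_bracket_coeff[OF abc] by simp
      then show False using P a other[of a] calculation by simp
    qed
    ultimately show ?thesis using 1 a unfolding null_weight_def by simp
  next
    case 2
    then have "l a = 3" "l c = 1" using struct_prod_null_mixed[OF a _ _ P] abc(3) by auto
    then show ?thesis using a 2 unfolding null_weight_def by auto
  next
    case 3
    have "struct_prod d a c b \<noteq> 0" using P by (simp add: struct_prod_swap)
    then have "l a = 3" "l b = 1" using struct_prod_null_mixed[OF a] 3 abc(2) by auto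
    then show ?thesis using a 3 unfolding null_weight_def by auto
  next
    case 4
    then have "b \<noteq> c" using P unfolding struct_prod_def by auto
    moreover have "br m n = - br n m" by (rule bracket_swap)
    ultimately have "struct_prod d a b c = - (g (br n m) a)\<^sup>2"
      using 4 a nm other unfolding struct_prod_def by (auto simp: power2_eq_square)
    moreover have "null_weight a - null_weight b - null_weight c \<le> 0"
      using level[of a] a 4 unfolding null_weight_def by auto
    ultimately show ?thesis by (simp add: mult_nonpos_nonneg)
  qed
qed

lemma einstein_nonneg_null:
  assumes "einstein br g lam"
  shows "0 \<le> lam"
proof (rule einstein_nonneg_by_weights[OF assms db graded_trace_ad[OF db gr] graded_killing[OF db gr]
      null_weight_term_nonneg])
  show "0 < sum null_weight I"
    using dual_basis_finite[OF db] nm null_level_pos unfolding null_weight_def by (intro sum_pos) auto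
qed

end

end

section \<open>Three-step nilpotent Lorentzian Einstein algebras\<close>

locale einstein_nilpotent3 = metric_lie_algebra g br + lorentz_form g e0
  for g :: "'a::euclidean_space \<Rightarrow> 'a \<Rightarrow> real" and br e0 +
  fixes lam :: real
  assumes lcs3: "lcs br 3 = {0}"
    and center_nondeg: "nondegenerate_on g (center br)"
    and einstein: "einstein br g lam"
begin

abbreviation Z :: "'a set" where "Z \<equiv> center br"

definition V :: "'a set" where "V = perp Z"

text \<open>\<open>U\<close> is the projection of the derived algebra \<open>[h, h]\<close> to \<open>V\<close> along the center.\<close>
definition U :: "'a set" where "U = {u \<in> V. \<exists>c \<in> lcs br 1. c - u \<in> Z}"

definition W :: "'a set" where "W = V \<inter> perp U"

lemma bracket_in_lcs1: "br x y \<in> lcs br 1"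
  using lcs.simps(2)[of br 0] by (auto intro: span_base)

lemma subspace_lcs1: "subspace (lcs br 1)"
  using lcs.simps(2)[of br 0] by (simp add: subspace_span)

lemma bracket_lcs1_in_lcs2:
  assumes "c \<in> lcs br 1"
  shows "br c y \<in> lcs br 2" and "br y c \<in> lcs br 2"
proof -
  show "br c y \<in> lcs br 2"
    using assms lcs.simps(2)[of br 1] by (auto simp: numeral_2_eq_2 intro: span_base)
  then show "br y c \<in> lcs br 2"
    using lcs.simps(2)[of br 1] by (simp add: bracket_swap[of y] numeral_2_eq_2 span_neg)
qed

lemma lcs2_central: "c \<in> lcs br 2 \<Longrightarrow> c \<in> Z"
  using lcs3 lcs.simps(2)[of br 2] unfolding center_def
  by (auto simp: numeral_3_eq_3 numeral_2_eq_2 intro: span_base)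

lemma bracket_central[simp]: "z \<in> Z \<Longrightarrow> br z x = 0" "z \<in> Z \<Longrightarrow> br x z = 0"
  unfolding center_def using bracket_swap[of x z] by auto

lemma subspace_center: "subspace Z"
  unfolding subspace_def center_def by simp

text \<open>By the Jacobi identity, since \<open>[h, [h, h]]\<close> is central.\<close>
lemma lcs1_commute:
  assumes "c \<in> lcs br 1" "c' \<in> lcs br 1"
  shows "br c c' = 0"
proof -
  have "c \<in> span {br x y | x y. x \<in> UNIV}" using assms(1) lcs.simps(2)[of br 0] by simp
  then show ?thesis
  proof (induction rule: span_induct)
    case (step v)
    then obtain x y where v: "v = br x y" by blast
    have "br x (br y c') = 0" "br y (br c' x) = 0"
      using lcs2_central bracket_lcs1_in_lcs2[OF assms(2)] by auto
    then have "br c' (br x y) = 0" using jacobi[of x y c'] by simp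
    then show ?case unfolding v using bracket_swap[of "br x y" c'] by simp
  qed (simp add: subspace_def)
qed

lemma subspace_V: "subspace V"
  unfolding V_def by (rule subspace_perp)

lemma V_perp_center: "v \<in> V \<Longrightarrow> z \<in> Z \<Longrightarrow> g v z = 0" "v \<in> V \<Longrightarrow> z \<in> Z \<Longrightarrow> g z v = 0"
  unfolding V_def perp_def using sym by auto

lemma center_split: "\<exists>z\<in>Z. x - z \<in> V"
  unfolding V_def by (rule nondegenerate_on_split[OF subspace_center center_nondeg])

lemma U_subset_V: "U \<subseteq> V"
  unfolding U_def by auto

lemma subspace_U: "subspace U"
  unfolding subspace_def U_def
proof (intro conjI ballI allI)
  show "0 \<in> {u \<in> V. \<exists>c\<in>lcs br 1. c - u \<in> Z}"
    using subspace_0[OF subspace_V] subspace_0[OF subspace_lcs1] subspace_0[OF subspace_center]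
    by (auto simp del: lcs.simps)
next
  fix x y assume "x \<in> {u \<in> V. \<exists>c\<in>lcs br 1. c - u \<in> Z}" "y \<in> {u \<in> V. \<exists>c\<in>lcs br 1. c - u \<in> Z}"
  then obtain c c' where xy: "x \<in> V" "y \<in> V" and cc: "c \<in> lcs br 1" "c' \<in> lcs br 1"
    and cx: "c - x \<in> Z" and cy: "c' - y \<in> Z"
    by auto
  have "(c + c') - (x + y) \<in> Z"
    using subspace_add[OF subspace_center cx cy] by (simp add: algebra_simps)
  then show "x + y \<in> {u \<in> V. \<exists>c\<in>lcs br 1. c - u \<in> Z}"
    using xy cc subspace_V subspace_lcs1 by (auto simp del: lcs.simps intro!: bexI[of _ "c + c'"] subspace_add)
next
  fix r x assume "x \<in> {u \<in> V. \<exists>c\<in>lcs br 1. c - u \<in> Z}"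
  then obtain c where x: "x \<in> V" and c: "c \<in> lcs br 1" and cx: "c - x \<in> Z" by auto
  have "r *\<^sub>R c - r *\<^sub>R x \<in> Z"
    using subspace_scale[OF subspace_center cx, of r] by (simp add: algebra_simps)
  then show "r *\<^sub>R x \<in> {u \<in> V. \<exists>c\<in>lcs br 1. c - u \<in> Z}"
    using x c subspace_V subspace_lcs1 by (auto simp del: lcs.simps intro!: bexI[of _ "r *\<^sub>R c"] subspace_scale)
qed

lemma U_bracket_central: "u \<in> U \<Longrightarrow> br u x \<in> Z"
proof -
  assume "u \<in> U"
  then obtain c where c: "c \<in> lcs br 1" "c - u \<in> Z" unfolding U_def by auto
  have "br u x = br c x" using bracket_central(1)[OF c(2), of x] by simp
  then show ?thesis using lcs2_central[OF bracket_lcs1_in_lcs2(1)[OF c(1)]] by simp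
qed

lemma U_commute: "u \<in> U \<Longrightarrow> u' \<in> U \<Longrightarrow> br u u' = 0"
proof -
  assume "u \<in> U" "u' \<in> U"
  then obtain c c' where c: "c \<in> lcs br 1" "c - u \<in> Z" and c': "c' \<in> lcs br 1" "c' - u' \<in> Z"
    unfolding U_def by auto
  have "br u u' = br c u'" using bracket_central(1)[OF c(2), of u'] by simp
  also have "\<dots> = br c c'" using bracket_central(2)[OF c'(2), of c] by simp
  also have "\<dots> = 0" using lcs1_commute c(1) c'(1) by simp
  finally show ?thesis .
qed

lemma W_perp_bracket: "a \<in> W \<Longrightarrow> g (br x y) a = 0"
proof -
  assume a: "a \<in> W"
  obtain z where z: "z \<in> Z" "br x y - z \<in> V" using center_split by blast
  moreover have "br x y - (br x y - z) \<in> Z" using z(1) by simp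
  ultimately have "br x y - z \<in> U" unfolding U_def using bracket_in_lcs1 by blast
  then have "g (br x y - z) a = 0" using a sym unfolding W_def perp_def by auto
  moreover have "g z a = 0" using a z(1) V_perp_center unfolding W_def by auto
  ultimately show ?thesis by simp
qed

lemma subspace_W: "subspace W"
  unfolding W_def by (intro subspace_inter subspace_V subspace_perp)

text \<open>Levels 1, 2, 3 stand for the layers \<open>W, U, Z\<close>. The conditions for levels 1 and 2 are
  imposed on the dual vectors only, as required by the null basis, whose dual swaps \<open>n \<in> U\<close> and
  \<open>m \<in> V\<close>.\<close>
lemma graded_by_layers:
  assumes level: "\<And>a. a \<in> I \<Longrightarrow> l a \<in> {1, 2, 3}"
    and in_U: "\<And>a. a \<in> I \<Longrightarrow> l a = 2 \<Longrightarrow> a \<in> U"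
    and in_Z: "\<And>a. a \<in> I \<Longrightarrow> l a = 3 \<Longrightarrow> a \<in> Z"
    and dual_W: "\<And>a. a \<in> I \<Longrightarrow> l a = 1 \<Longrightarrow> d a \<in> W"
    and dual_V: "\<And>a. a \<in> I \<Longrightarrow> l a = 2 \<Longrightarrow> d a \<in> V"
  shows "graded I d l"
  unfolding graded_def
proof (intro conjI ballI impI)
  fix a b c assume abc: "a \<in> I" "b \<in> I" "c \<in> I" and lt: "l a < l b + l c"
  consider "l b = 3 \<or> l c = 3" | "l b = 2" "l c = 2" | "l a = 1" | "l a = 2" "l b = 2 \<or> l c = 2"
    using level[OF abc(1)] level[OF abc(2)] level[OF abc(3)] lt by force
  then show "g (br b c) (d a) = 0"
  proof cases
    case 1
    then show ?thesis using in_Z abc by auto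
  next
    case 2
    then show ?thesis using U_commute in_U abc by simp
  next
    case 3
    then show ?thesis using W_perp_bracket dual_W abc by simp
  next
    case 4
    have "br b c \<in> Z"
    proof (cases "l b = 2")
      case True
      then show ?thesis using U_bracket_central in_U abc by blast
    next
      case False
      then have "br c b \<in> Z" using 4(2) U_bracket_central in_U abc by auto
      then have "- br c b \<in> Z" by (rule subspace_neg[OF subspace_center])
      then show ?thesis by (simp add: bracket_swap[of c b])
    qed
    then show ?thesis using V_perp_center dual_V 4(1) abc by auto
  qed
qed (use level in force)

lemma decompose_layers:
  assumes "nondegenerate_on g U"
  shows "\<exists>w\<in>W. \<exists>u\<in>U. \<exists>z\<in>Z. y = w + u + z"
proof -
  obtain z where z: "z \<in> Z" "y - z \<in> V" using center_split by blast
  obtain u where u: "u \<in> U" "y - z - u \<in> perp U"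
    using nondegenerate_on_split[OF subspace_U assms] by blast
  have "y - z - u \<in> W"
    unfolding W_def using u z(2) U_subset_V subspace_V by (auto intro: subspace_diff)
  then show ?thesis using u(1) z(1) by (intro bexI[of _ "y - z - u"] bexI[of _ u] bexI[of _ z]) auto
qed

lemma layers_perp:
  "w \<in> W \<Longrightarrow> u \<in> U \<Longrightarrow> g w u = 0" "w \<in> W \<Longrightarrow> z \<in> Z \<Longrightarrow> g w z = 0" "u \<in> U \<Longrightarrow> z \<in> Z \<Longrightarrow> g u z = 0"
  using V_perp_center U_subset_V unfolding W_def perp_def by auto

lemma timelike_in_layer:
  assumes "nondegenerate_on g U"
  shows "\<exists>t \<in> W \<union> U \<union> Z. g t t < 0"
proof (rule ccontr)
  assume "\<not> ?thesis"
  then have nonneg: "0 \<le> g x x" if "x \<in> W \<union> U \<union> Z" for x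
    using that by (auto simp: not_less[symmetric])
  obtain w u z where "w \<in> W" "u \<in> U" "z \<in> Z" and e0: "e0 = w + u + z"
    using decompose_layers[OF assms] by blast
  then have "g e0 e0 = g w w + g u u + g z z"
    using layers_perp sym[of u w] sym[of z w] sym[of z u] by (simp add: e0)
  also have "\<dots> \<ge> 0" using nonneg \<open>w \<in> W\<close> \<open>u \<in> U\<close> \<open>z \<in> Z\<close> by (simp add: add_nonneg_nonneg)
  finally show False using timelike_e0 by simp
qed

definition layer :: "nat \<Rightarrow> 'a set" where
  "layer i = (if i = 1 then W else if i = 2 then U else Z)"

lemma subspace_layer: "subspace (layer i)"
  unfolding layer_def using subspace_W subspace_U subspace_center by simp

lemma layer_perp:
  assumes "i \<noteq> j" "i \<in> {1, 2, 3}" "j \<in> {1, 2, 3}" "x \<in> layer i" "y \<in> layer j"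
  shows "g x y = 0"
  using assms layers_perp sym[of x y] unfolding layer_def by auto

lemma unit_timelike_in_layer:
  assumes "nondegenerate_on g U"
  shows "\<exists>k\<in>{1, 2, 3}. \<exists>t\<in>layer k. g t t = -1"
proof -
  obtain t0 where t0: "t0 \<in> W \<union> U \<union> Z" "g t0 t0 < 0" using timelike_in_layer[OF assms] by blast
  then have "t0 \<in> layer 1 \<or> t0 \<in> layer 2 \<or> t0 \<in> layer 3" unfolding layer_def by auto
  then obtain k where k: "k \<in> {1, 2, 3}" "t0 \<in> layer k" by blast
  then have "(1 / sqrt (- g t0 t0)) *\<^sub>R t0 \<in> layer k" by (simp add: subspace_scale[OF subspace_layer])
  with k(1) timelike_normalize[OF t0(2)] show ?thesis by blast
qed

lemma perp_layers_eq_0: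
  assumes "nondegenerate_on g U" and perp: "\<And>i. i \<in> {1, 2, 3} \<Longrightarrow> x \<in> perp (layer i)"
  shows "x = 0"
proof (rule eq_if_g_eq)
  fix y
  obtain w u z where "w \<in> W" "u \<in> U" "z \<in> Z" "y = w + u + z"
    using decompose_layers[OF assms(1)] by blast
  then show "g x y = g 0 y" using perp[of 1] perp[of 2] perp[of 3] unfolding perp_def layer_def by simp
qed

lemma layer_orthonormal_bases:
  assumes "g t t = -1"
  shows "\<exists>B. \<forall>i. finite (B i) \<and> B i \<subseteq> layer i \<inter> perp {t} \<and> layer i \<inter> perp {t} \<subseteq> span (B i)
    \<and> orthonormal (B i)"
proof -
  have "pos_def_on (layer i \<inter> perp {t})" for i
    by (rule pos_def_on_subset[OF pos_def_on_perp_timelike]) (use assms in auto)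
  then have "\<forall>i. \<exists>B. finite B \<and> B \<subseteq> layer i \<inter> perp {t} \<and> layer i \<inter> perp {t} \<subseteq> span B \<and> orthonormal B"
    using pos_def_on_orthonormal_basis[OF subspace_inter[OF subspace_layer subspace_perp]] by blast
  then show ?thesis by (rule choice)
qed

text \<open>Shifting by a multiple of \<open>t\<close> moves any vector of a layer into its part orthogonal
  to \<open>t\<close>; this works also for the layers not containing \<open>t\<close>, which are orthogonal to it.\<close>
lemma perp_layer_if_perp_basis:
  assumes k: "k \<in> {1, 2, 3}" "t \<in> layer k" "g t t = -1" and i: "i \<in> {1, 2, 3}"
    and span: "layer i \<inter> perp {t} \<subseteq> span B" and x: "x \<in> perp B" "g x t = 0"
  shows "x \<in> perp (layer i)"
  unfolding perp_iff
proof
  fix s assume s: "s \<in> layer i"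
  have "t \<in> layer i \<or> g s t = 0" using layer_perp[OF _ i k(1) s k(2)] k(2) by (cases "i = k") auto
  then have "s + g s t *\<^sub>R t \<in> layer i"
    using s subspace_add[OF subspace_layer s subspace_scale[OF subspace_layer]] by auto
  moreover have "s + g s t *\<^sub>R t \<in> perp {t}" using k(3) unfolding perp_def by simp
  ultimately have "g x (s + g s t *\<^sub>R t) = 0" using span x(1) perp_span by blast
  then show "g x s = 0" using x(2) by simp
qed

lemma einstein_nonneg_if_U_nondegenerate:
  assumes U_nondeg: "nondegenerate_on g U"
  shows "0 \<le> lam"
proof -
  obtain k t where k: "k \<in> {1, 2, 3}" and t: "t \<in> layer k" "g t t = -1"
    using unit_timelike_in_layer[OF U_nondeg] by blast
  obtain B where B: "\<forall>i. finite (B i) \<and> B i \<subseteq> layer i \<inter> perp {t}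
      \<and> layer i \<inter> perp {t} \<subseteq> span (B i) \<and> orthonormal (B i)"
    using layer_orthonormal_bases[OF t(2)] by blast
  have B_layer: "B i \<subseteq> layer i" and B_perp: "B i \<subseteq> perp {t}" and B_on: "orthonormal (B i)" for i
    using B by blast+
  have B123: "B 1 \<subseteq> W" "B 2 \<subseteq> U" "B 3 \<subseteq> Z"
    using B_layer[of 1] B_layer[of 2] B_layer[of 3] unfolding layer_def by simp_all
  have "orthonormal (B 1 \<union> B 2)"
    by (rule orthonormal_Un[OF B_on B_on]) (use B123 layers_perp(1) in blast)
  then have on: "orthonormal (B 1 \<union> B 2 \<union> B 3)"
    by (rule orthonormal_Un[OF _ B_on]) (use B123 layers_perp(2,3) in blast)
  have B_t: "g c t = 0" "g t c = 0" if "c \<in> B 1 \<union> B 2 \<union> B 3" for c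
    using B_perp that sym[of t c] unfolding perp_def by auto
  define I where "I = insert t (B 1 \<union> B 2 \<union> B 3)"
  define l where "l a = (if a \<in> W then 1 else if a \<in> U then 2 else 3 :: nat)" for a
  have "layer i \<subseteq> W \<union> U \<union> Z" for i unfolding layer_def by auto
  then have I_layers: "I \<subseteq> W \<union> U \<union> Z" using t(1) B_layer unfolding I_def by blast
  show ?thesis
  proof (rule einstein_nonneg_timelike[OF einstein _ _ _ _ t(2)])
    show "finite I" "t \<in> I" unfolding I_def using B by simp_all
  next
    fix a b assume "a \<in> I" "b \<in> I" "a \<noteq> b"
    then show "g a b = 0" using on B_t unfolding I_def orthonormal_def by auto
  next
    fix a assume "a \<in> I" "a \<noteq> t"
    then show "g a a = 1" using on unfolding I_def orthonormal_def by auto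
  next
    fix x assume x: "\<And>a. a \<in> I \<Longrightarrow> g x a = 0"
    have xt: "g x t = 0" using x unfolding I_def by simp
    have "x \<in> perp (layer i)" if i: "i \<in> {1, 2, 3}" for i
    proof (rule perp_layer_if_perp_basis[OF k t i _ _ xt])
      show "layer i \<inter> perp {t} \<subseteq> span (B i)" using B by blast
      show "x \<in> perp (B i)" using x i unfolding I_def perp_def by auto
    qed
    then show "x = 0" by (rule perp_layers_eq_0[OF U_nondeg])
  next
    show "graded I (\<lambda>a. a) l"
      by (rule graded_by_layers) (use I_layers U_subset_V in \<open>auto simp: l_def split: if_splits\<close>)
  next
    fix a show "l a \<le> 3" unfolding l_def by simp
  qed
qed

lemma null_partner:
  assumes nV: "n \<in> V" and n0: "n \<noteq> 0" and nn: "g n n = 0"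
  shows "\<exists>m\<in>V. g n m = 1 \<and> g m m = 0"
proof -
  have "\<exists>v\<in>V. g n v \<noteq> 0"
  proof (rule ccontr)
    assume "\<not> ?thesis"
    then have nv: "g n v = 0" if "v \<in> V" for v using that by blast
    have "g n y = g 0 y" for y
    proof -
      obtain z where "z \<in> Z" "y - z \<in> V" using center_split by blast
      then have "g n (y - z) = 0" "g n z = 0" using nv V_perp_center(1)[OF nV] by blast+
      then show ?thesis by simp
    qed
    then show False using eq_if_g_eq n0 by blast
  qed
  then obtain v where v: "v \<in> V" "g n v \<noteq> 0" by blast
  define m0 where "m0 = (1 / g n v) *\<^sub>R v"
  define m where "m = m0 - (g m0 m0 / 2) *\<^sub>R n"
  have "g n m0 = 1" "g m0 n = 1" unfolding m0_def using v(2) sym[of v n] by simp_all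
  then have "g n m = 1 \<and> g m m = 0" unfolding m_def using nn by (simp add: algebra_simps)
  moreover have "m \<in> V"
    unfolding m_def m0_def using v(1) nV subspace_V by (intro subspace_diff subspace_scale)
  ultimately show ?thesis by blast
qed

text \<open>The degenerate case: \<open>n\<close> is a null vector of \<open>U\<close> orthogonal to \<open>U\<close>, and \<open>m \<in> V\<close> is a null
  partner of it. Then \<open>V\<close> splits into the hyperbolic plane of \<open>n, m\<close>, the space \<open>Um\<close> and the
  space \<open>Wnm\<close>, and \<open>Z, Um, Wnm\<close> are spacelike.\<close>
context
  fixes n m :: 'a
  assumes nU: "n \<in> U" and n_perp_U: "n \<in> perp U" and mV: "m \<in> V"
    and nm: "g n m = 1" and mm: "g m m = 0"
begin

definition Um :: "'a set" where "Um = U \<inter> perp {m}"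

definition Wnm :: "'a set" where "Wnm = V \<inter> perp {n, m} \<inter> perp Um"

lemma null_n: "g n n = 0"
  using nU n_perp_U unfolding perp_def by simp

lemma n_in_W: "n \<in> W"
  using nU n_perp_U U_subset_V unfolding W_def by auto

lemma U_perp_n: "u \<in> U \<Longrightarrow> g u n = 0"
  using n_perp_U sym[of n u] unfolding perp_def by auto

lemma Wnm_subset_W: "Wnm \<subseteq> W"
proof
  fix w assume w: "w \<in> Wnm"
  have "g w u = 0" if u: "u \<in> U" for u
  proof -
    have "u - g u m *\<^sub>R n \<in> Um"
      unfolding Um_def perp_def using u nU subspace_U nm by (simp add: subspace_diff subspace_scale)
    then have "g w (u - g u m *\<^sub>R n) = 0" "g w n = 0" using w unfolding Wnm_def perp_def by auto
    then show ?thesis by simp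
  qed
  then show "w \<in> W" using w unfolding Wnm_def W_def perp_def by auto
qed

lemma null_layers_perp_nm: "x \<in> Wnm \<union> Um \<union> Z \<Longrightarrow> g x n = 0 \<and> g x m = 0"
  using U_perp_n V_perp_center(2) n_in_W mV W_def unfolding Wnm_def Um_def perp_def by auto

lemma null_layers_perp:
  "x \<in> Wnm \<Longrightarrow> y \<in> Um \<Longrightarrow> g x y = 0" "x \<in> Wnm \<Longrightarrow> y \<in> Z \<Longrightarrow> g x y = 0"
  "x \<in> Um \<Longrightarrow> y \<in> Z \<Longrightarrow> g x y = 0"
  using V_perp_center(1) U_subset_V unfolding Wnm_def Um_def perp_def by auto

text \<open>The three layers lie in the orthogonal complement of the timelike vector \<open>n - m\<close>.\<close>
lemma pos_def_null_layers: "pos_def_on Wnm" "pos_def_on Um" "pos_def_on Z"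
proof -
  have "g (n - m) (n - m) < 0" using null_n mm nm sym[of m n] by simp
  then have pd: "pos_def_on (perp {n - m})" by (rule pos_def_on_perp_timelike)
  have "Wnm \<union> Um \<union> Z \<subseteq> perp {n - m}" using null_layers_perp_nm unfolding perp_def by auto
  then show "pos_def_on Wnm" "pos_def_on Um" "pos_def_on Z" using pos_def_on_subset[OF pd] by auto
qed

lemma null_dual_basis:
  assumes B1: "finite B1" "B1 \<subseteq> Wnm" "Wnm \<subseteq> span B1" "orthonormal B1"
    and B2: "finite B2" "B2 \<subseteq> Um" "Um \<subseteq> span B2" "orthonormal B2"
    and B3: "finite B3" "B3 \<subseteq> Z" "Z \<subseteq> span B3" "orthonormal B3"
  shows "dual_basis (insert n (insert m (B1 \<union> B2 \<union> B3))) (\<lambda>a. if a = n then m else if a = m then n else a)"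
    (is "dual_basis ?I ?d")
proof -
  have "orthonormal (B1 \<union> B2)"
    by (rule orthonormal_Un[OF B1(4) B2(4)]) (use B1(2) B2(2) null_layers_perp(1) in blast)
  then have on: "orthonormal (B1 \<union> B2 \<union> B3)"
    by (rule orthonormal_Un[OF _ B3(4)]) (use B1(2) B2(2) B3(2) null_layers_perp(2,3) in blast)
  then have unit: "g b b = 1" if "b \<in> B1 \<union> B2 \<union> B3" for b
    using that unfolding orthonormal_def by blast
  have nm_B: "n \<noteq> m" "n \<notin> B1 \<union> B2 \<union> B3" "m \<notin> B1 \<union> B2 \<union> B3"
    using null_n mm nm unit by force+
  have B_nm: "g b n = 0 \<and> g b m = 0 \<and> g n b = 0 \<and> g m b = 0" if "b \<in> B1 \<union> B2 \<union> B3" for b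
    using null_layers_perp_nm[of b] that B1(2) B2(2) B3(2) sym[of b] by auto
  show ?thesis
  proof (rule dual_basisI)
    show "finite ?I" using B1(1) B2(1) B3(1) by simp
  next
    fix a b assume "a \<in> ?I" "b \<in> ?I"
    then show "g a (?d b) = (if a = b then 1 else 0)"
      using on B_nm null_n mm nm sym[of m n] nm_B unfolding orthonormal_def by auto
  next
    fix x assume x: "\<And>a. a \<in> ?I \<Longrightarrow> g x (?d a) = 0"
    have "g x b = 0" if "b \<in> B1 \<union> B2 \<union> B3" for b
      using x[of b] that nm_B by (auto split: if_splits)
    moreover have "g x m = 0" "g x n = 0" using x[of n] x[of m] nm_B by auto
    ultimately have "x \<in> perp B1" "x \<in> perp B2" "x \<in> perp B3" "x \<in> perp {n, m}"
      unfolding perp_def by auto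
    then have "x \<in> perp Wnm" "x \<in> perp Um" "x \<in> perp Z"
      using B1(3) B2(3) B3(3) perp_span unfolding perp_iff by blast+
    then have "x \<in> Wnm" "g x x = 0"
      using \<open>x \<in> perp {n, m}\<close> unfolding Wnm_def V_def perp_def by auto
    then show "x = 0" using pos_def_null_layers(1) unfolding pos_def_on_def by force
  qed
qed

lemma einstein_nonneg_of_null_pair: "0 \<le> lam"
proof -
  have "subspace Wnm" "subspace Um"
    unfolding Wnm_def Um_def by (intro subspace_inter subspace_V subspace_U subspace_perp)+
  then obtain B1 B2 B3 where
    B1: "finite B1" "B1 \<subseteq> Wnm" "Wnm \<subseteq> span B1" "orthonormal B1" and
    B2: "finite B2" "B2 \<subseteq> Um" "Um \<subseteq> span B2" "orthonormal B2" and
    B3: "finite B3" "B3 \<subseteq> Z" "Z \<subseteq> span B3" "orthonormal B3"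
    using pos_def_on_orthonormal_basis pos_def_null_layers subspace_center by meson
  define I where "I = insert n (insert m (B1 \<union> B2 \<union> B3))"
  define d where "d a = (if a = n then m else if a = m then n else a)" for a
  define l where "l a = (if a = n then 2 else if a = m then 1 else if a \<in> Wnm then 1
    else if a \<in> U then 2 else 3 :: nat)" for a
  have db: "dual_basis I d"
    unfolding I_def d_def by (rule null_dual_basis[OF B1 B2 B3])
  have nm_I: "n \<noteq> m" "n \<in> I" "m \<in> I" "d n = m" "d m = n"
    using null_n nm unfolding I_def d_def by auto
  have "graded I d l"
    by (rule graded_by_layers)
      (use nU n_in_W mV Wnm_subset_W B1(2) B2(2) B3(2) U_subset_V in
        \<open>auto simp: I_def d_def l_def Um_def split: if_splits\<close>)
  from einstein_nonneg_null[OF db nm_I(2,3,1,4,5) _ this _ _ _ einstein]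
  show ?thesis by (auto simp: d_def l_def W_perp_bracket[OF n_in_W])
qed

end

lemma einstein_nonneg_if_U_degenerate:
  assumes "n \<in> U" "n \<noteq> 0" "n \<in> perp U"
  shows "0 \<le> lam"
proof -
  have "n \<in> V" "g n n = 0" using assms U_subset_V unfolding perp_def by auto
  then obtain m where "m \<in> V" "g n m = 1" "g m m = 0" using null_partner assms(2) by blast
  with assms show ?thesis by (intro einstein_nonneg_of_null_pair)
qed

end

context nondeg_form
begin

lemma pos_def_perp_lorentzian_basis:
  assumes fin: "finite B" and spanB: "span B = UNIV" and e0: "e0 \<in> B" "g e0 e0 = -1"
    and unit: "\<And>e. e \<in> B - {e0} \<Longrightarrow> g e e = 1"
    and orth: "\<And>e f. e \<in> B \<Longrightarrow> f \<in> B \<Longrightarrow> e \<noteq> f \<Longrightarrow> g e f = 0"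
  shows "pos_def_on (perp {e0})"
  unfolding pos_def_on_def
proof (intro ballI impI)
  have complete: "x = 0" if "\<And>e. e \<in> B \<Longrightarrow> g x e = 0" for x
  proof (rule eq_if_g_eq)
    fix y have "x \<in> perp B" using that unfolding perp_def by blast
    then show "g x y = g 0 y" using perp_span spanB by simp
  qed
  have db: "dual_basis B (\<lambda>e. g e e *\<^sub>R e)"
    by (rule dual_basis_pseudo_orthonormal[OF fin _ orth complete]) (use e0 unit in force)
  fix y assume "y \<in> perp {e0}" "y \<noteq> 0"
  then have ye0: "g y e0 = 0" unfolding perp_def by simp
  have "g y y = (\<Sum>e\<in>B. g y (g e e *\<^sub>R e) * g e y)" by (rule dual_basis_g[OF db])
  also have "\<dots> = (\<Sum>e\<in>B. g e e * (g y e)\<^sup>2)"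
  proof (rule sum.cong[OF refl])
    fix e show "g y (g e e *\<^sub>R e) * g e y = g e e * (g y e)\<^sup>2"
      using sym[of e y] by (simp add: power2_eq_square)
  qed
  also have "\<dots> = (\<Sum>e\<in>B - {e0}. (g y e)\<^sup>2)"
    using fin e0 ye0 unit by (simp add: sum.remove)
  finally have gyy: "g y y = (\<Sum>e\<in>B - {e0}. (g y e)\<^sup>2)" .
  show "0 < g y y"
  proof (rule ccontr)
    assume "\<not> 0 < g y y"
    moreover have "0 \<le> (\<Sum>e\<in>B - {e0}. (g y e)\<^sup>2)" by (rule sum_nonneg) simp
    ultimately have "(\<Sum>e\<in>B - {e0}. (g y e)\<^sup>2) = 0" using gyy by simp
    then have "g y e = 0" if "e \<in> B" for e
      using that ye0 fin sum_nonneg_eq_0_iff[of "B - {e0}" "\<lambda>e. (g y e)\<^sup>2"] by (cases "e = e0") auto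
    then have "y = 0" by (rule complete)
    with \<open>y \<noteq> 0\<close> show False ..
  qed
qed

end

context einstein_nilpotent3
begin

lemma einstein_constant_nonneg: "0 \<le> lam"
proof (cases "nondegenerate_on g U")
  case True
  then show ?thesis by (rule einstein_nonneg_if_U_nondegenerate)
next
  case False
  then obtain n where "n \<in> U" "n \<noteq> 0" "n \<in> perp U"
    unfolding nondegenerate_on_def perp_def by blast
  then show ?thesis by (rule einstein_nonneg_if_U_degenerate)
qed

end

theorem theorem3p1:
  fixes br :: "'a::euclidean_space \<Rightarrow> 'a \<Rightarrow> 'a"
    and g :: "'a \<Rightarrow> 'a \<Rightarrow> real"
    and lam :: real
  assumes "lie_algebra br"
    and "three_step_nilpotent br"
    and "lorentzian g"
    and "nondegenerate_on g (center br)"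
    and "einstein br g lam"
  shows "lam \<ge> 0"
proof -
  obtain B e0 where B: "independent B" "span B = UNIV" "e0 \<in> B" "g e0 e0 = -1"
    "\<forall>e\<in>B - {e0}. g e e = 1" "\<forall>e\<in>B. \<forall>f\<in>B. e \<noteq> f \<longrightarrow> g e f = 0"
    using assms(3) unfolding lorentzian_def by blast
  interpret nondeg_form g
    using assms(3) unfolding lorentzian_def by unfold_locales auto
  have "pos_def_on (perp {e0})"
    using B independent_imp_finite by (intro pos_def_perp_lorentzian_basis) auto
  (* only lcs br 3 = {0} is used: the bound holds for nilpotent algebras of step at most 3 *)
  then interpret einstein_nilpotent3 g br e0 lam
    using assms B(4) unfolding three_step_nilpotent_def by unfold_locales auto
  show ?thesis by (rule einstein_constant_nonneg)
qed

end
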